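(* Let $n,k,s$ be positive integers with $2\le s\le\lfloor n/k\rfloor$, let $d=\lfloor n/s\rfloor$ (so $d\ge k$), and let $M>0$. For $i\in[0:\lfloor k/2\rfloor]$ define $$f(i)=\begin{cases}\dfrac{Md}{(2k-i-1)i+k(d-k+1)} & 0\le i<\lfloor k/2\rfloor,\\[2mm] \dfrac{Md}{kd-\lfloor k/2\rfloor\lceil k/2\rceil} & i=\lfloor k/2\rfloor.\end{cases}$$ For a repair bandwidth $\gamma=d\beta$ with $\gamma\ge f(\lfloor k/2\rfloor)$, let $\alpha^*(\gamma)$ be the smallest storage $\alpha$ such that, in every information flow graph of the FCRS with parameters $(n,k,s)$, storage $\alpha$ and per-helper download $\beta=\gamma/d$, every data collector has min-cut (to the source) at least $M$. Then $$\alpha^*(\gamma)=\begin{cases}\dfrac{M}{k} & \text{if } \gamma\in[f(0),\infty),\\[2mm] \dfrac{M-\frac{i}{d}(d-k+i)\gamma}{k-i} & \text{if } \gamma\in[f(i),f(i-1)) \text{ for some } i\in[1:\lfloor k/2\rfloor].\end{cases}$$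
   Context: Notation: $[a]=\{1,\dots,a\}$, $[a:b]=\{a,a+1,\dots,b\}$. Fixed Cluster Repair System (FCRS) with parameters $(n,k,s)$: $n=ds+s_0$ servers with $d=\lfloor n/s\rfloor$, $s_0=n \bmod s$, partitioned into clusters $1,\dots,s$ of size $d$ and a cluster $s+1$ of size $s_0$; server $j$ of cluster $i$ is indexed $(i,j)$. A file of size $M$ is stored; each server stores at most $\alpha$ units. Time is slotted; at the end of each time slot exactly one server $(r,\ell)$ fails and is replaced by a newcomer, which chooses an arbitrary repair cluster $i\in[s]$ with $i\neq r$ (cluster $s+1$ never serves as a repair group) and downloads $\beta$ units from each of the $d$ servers of cluster $i$; the repair bandwidth is $\gamma=d\beta$. Under functional repair, any $k$ servers (from any clusters) must be able to recover the file at all times. Information flow graph: a source node; for every server $(i,j)$ and time $t\ge0$ an in-node and an out-node joined by an edge of capacity $\alpha$; at $t=0$ the source connects to every in-node with infinite capacity. If server $(r,\ell)$ fails at the end of slot $t-1$ and is repaired by cluster $i$, there are edges of capacity $\beta$ from the out-nodes at time $t-1$ of all $d$ servers of cluster $i$ to the in-node of $(r,\ell)$ at time $t$; every other server has an infinite-capacity edge from its out-node at time $t-1$ to its in-node at time $t$. A data collector at time $t$ is a node connected by infinite-capacity edges from the time-$t$ out-nodes of some $k$ distinct servers. The graph depends on the (arbitrary, finite) sequence of failures and choices of repair clusters. (The min-cut condition is the feasibility criterion for functional repair, achievable e.g. by random linear network codes.) *)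

theory Defs
  imports "HOL-Library.Extended_Nonnegative_Real"
begin

text \<open>Fixed Cluster Repair System (FCRS) with parameters (n,k,s).
  A server is a pair (i,j) (cluster i, index j).\<close>

definition fcrs_d :: "nat \<Rightarrow> nat \<Rightarrow> nat" where
  "fcrs_d n s = n div s"

definition fcrs_s0 :: "nat \<Rightarrow> nat \<Rightarrow> nat" where
  "fcrs_s0 n s = n mod s"

definition servers :: "nat \<Rightarrow> nat \<Rightarrow> (nat \<times> nat) set" where
  "servers n s =
     {(i, j). (1 \<le> i \<and> i \<le> s \<and> 1 \<le> j \<and> j \<le> fcrs_d n s)
            \<or> (i = s + 1 \<and> 1 \<le> j \<and> j \<le> fcrs_s0 n s)}"

text \<open>A failure/repair event (r, l, i): server (r,l) fails and is repaired
  by downloading from all d servers of cluster i.  A failure sequence is a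
  list of such events; the event fs ! t happens at the end of slot t, so the
  newcomer's in-node lives at time t+1.\<close>

definition valid_event :: "nat \<Rightarrow> nat \<Rightarrow> nat \<times> nat \<times> nat \<Rightarrow> bool" where
  "valid_event n s e = (case e of (r, l, i) \<Rightarrow>
      (r, l) \<in> servers n s \<and> 1 \<le> i \<and> i \<le> s \<and> i \<noteq> r)"

definition valid_seq :: "nat \<Rightarrow> nat \<Rightarrow> (nat \<times> nat \<times> nat) list \<Rightarrow> bool" where
  "valid_seq n s fs = (\<forall>e \<in> set fs. valid_event n s e)"

datatype ifg_node = Src | In "nat \<times> nat" nat | Out "nat \<times> nat" nat | DC

definition ifg_nodes :: "nat \<Rightarrow> nat \<Rightarrow> (nat \<times> nat \<times> nat) list \<Rightarrow> ifg_node set" where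
  "ifg_nodes n s fs =
     {Src, DC} \<union> {In x t | x t. x \<in> servers n s \<and> t \<le> length fs}
               \<union> {Out x t | x t. x \<in> servers n s \<and> t \<le> length fs}"

text \<open>Edge capacities (0 = no edge).  Parameters: alpha (storage), beta
  (per-helper download), K (servers the collector connects to), tc (time of
  the collector).\<close>

fun ifg_cap :: "nat \<Rightarrow> nat \<Rightarrow> (nat \<times> nat \<times> nat) list \<Rightarrow> real \<Rightarrow> real \<Rightarrow>
    (nat \<times> nat) set \<Rightarrow> nat \<Rightarrow> ifg_node \<Rightarrow> ifg_node \<Rightarrow> ennreal" where
  "ifg_cap n s fs \<alpha> \<beta> K tc Src (In x t) =
     (if x \<in> servers n s \<and> t = 0 then \<infinity> else 0)"
| "ifg_cap n s fs \<alpha> \<beta> K tc (In x t) (Out y t') =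
     (if x = y \<and> t = t' \<and> x \<in> servers n s \<and> t \<le> length fs then ennreal \<alpha> else 0)"
| "ifg_cap n s fs \<alpha> \<beta> K tc (Out y t') (In x t) =
     (if x \<in> servers n s \<and> y \<in> servers n s \<and> 1 \<le> t \<and> t \<le> length fs \<and> t' = t - 1 then
        (case fs ! (t - 1) of (r, l, i) \<Rightarrow>
           if x = (r, l) then (if fst y = i then ennreal \<beta> else 0)
           else (if y = x then \<infinity> else 0))
      else 0)"
| "ifg_cap n s fs \<alpha> \<beta> K tc (Out x t) DC =
     (if x \<in> K \<and> t = tc then \<infinity> else 0)"
| "ifg_cap n s fs \<alpha> \<beta> K tc _ _ = 0"

definition cut_value :: "nat \<Rightarrow> nat \<Rightarrow> (nat \<times> nat \<times> nat) list \<Rightarrow> real \<Rightarrow> real \<Rightarrow>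
    (nat \<times> nat) set \<Rightarrow> nat \<Rightarrow> ifg_node set \<Rightarrow> ennreal" where
  "cut_value n s fs \<alpha> \<beta> K tc S =
     (\<Sum>u \<in> S. \<Sum>v \<in> ifg_nodes n s fs - S. ifg_cap n s fs \<alpha> \<beta> K tc u v)"

definition min_cut :: "nat \<Rightarrow> nat \<Rightarrow> (nat \<times> nat \<times> nat) list \<Rightarrow> real \<Rightarrow> real \<Rightarrow>
    (nat \<times> nat) set \<Rightarrow> nat \<Rightarrow> ennreal" where
  "min_cut n s fs \<alpha> \<beta> K tc =
     (INF S \<in> {S. S \<subseteq> ifg_nodes n s fs \<and> Src \<in> S \<and> DC \<notin> S}.
        cut_value n s fs \<alpha> \<beta> K tc S)"

definition is_smallest :: "real set \<Rightarrow> real \<Rightarrow> bool" where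
  "is_smallest A x = (x \<in> A \<and> (\<forall>y \<in> A. x \<le> y))"

definition fcrs_feasible :: "nat \<Rightarrow> nat \<Rightarrow> nat \<Rightarrow> real \<Rightarrow> real \<Rightarrow> real \<Rightarrow> bool" where
  "fcrs_feasible n k s M \<alpha> \<beta> =
     (\<forall>fs K tc. valid_seq n s fs \<longrightarrow> tc \<le> length fs \<longrightarrow>
        K \<subseteq> servers n s \<longrightarrow> card K = k \<longrightarrow>
        ennreal M \<le> min_cut n s fs \<alpha> \<beta> K tc)"

definition fcrs_f :: "nat \<Rightarrow> nat \<Rightarrow> nat \<Rightarrow> real \<Rightarrow> nat \<Rightarrow> real" where
  "fcrs_f n k s M i =
     (let d = real (fcrs_d n s) in
      if i < k div 2 then
        M * d / ((2 * real k - real i - 1) * real i + real k * (d - real k + 1))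
      else
        M * d / (real k * d - real (k div 2) * real ((k + 1) div 2)))"

end

theory Submission
  imports Defs
begin

text \<open>The storage needed for per-helper download \<beta> is governed by the bounds
  (k - u) \<alpha> + u (d - k + u) \<beta> for 0 \<le> u \<le> \<lfloor>k/2\<rfloor>.  Every cut between the source and a
  data collector costs at least one of them: reading the failures in time order, the
  collector's side of the cut is a list of records (cluster, helpers on the collector's side),
  and since helpers come from one other cluster that was recorded earlier, u records can save
  at most u (k - u) helper edges in total.  Conversely, letting i servers of cluster 2 fail in
  turn and repairing them from cluster 1 produces a cut of capacity exactly the i-th bound.
  So \<alpha> is feasible iff it meets all bounds; the bounds are convex in u, and the
  thresholds f(i) are the bandwidths at which the least of them moves from i to i + 1.\<close>

text \<open>The capacity of a cut through k - u storage edges and u repairs that each keep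
  d - k + u helpers on the source side.\<close>

definition cut_bound :: "nat \<Rightarrow> nat \<Rightarrow> real \<Rightarrow> real \<Rightarrow> nat \<Rightarrow> real" where
  "cut_bound k d \<alpha> \<beta> u = (real k - real u) * \<alpha> + real u * (real d - real k + real u) * \<beta>"

section \<open>Admissible record lists\<close>

definition cluster_count :: "nat \<Rightarrow> (nat \<times> nat) list \<Rightarrow> nat" where
  "cluster_count X L = length (filter (\<lambda>r. fst r = X) L)"

text \<open>A record (Y, c) stands for a server of cluster Y on the collector's side of a cut,
  and c for the number of its helpers that lie on the collector's side as well.  All helpers
  come from one other cluster X and were recorded earlier, so c is bounded by the number of
  earlier records of X.\<close>

inductive admissible :: "(nat \<times> nat) list \<Rightarrow> bool" where
  admissible_Nil: "admissible []"
| admissible_snoc: "admissible L \<Longrightarrow> c = 0 \<or> (\<exists>X. X \<noteq> Y \<and> c \<le> cluster_count X L)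
    \<Longrightarrow> admissible (L @ [(Y, c)])"

lemma admissible_butlast: "admissible (L @ [r]) \<Longrightarrow> admissible L"
  by (cases rule: admissible.cases) auto

lemma admissible_appendD: "admissible (L @ R) \<Longrightarrow> admissible L"
proof (induction R rule: rev_induct)
  case (snoc r R)
  then show ?case using admissible_butlast[of "L @ R" r] by simp
qed simp

lemma admissible_take: "admissible L \<Longrightarrow> admissible (take m L)"
  by (rule admissible_appendD[of _ "drop m L"]) simp

lemma admissible_append_unhelped:
  "admissible L \<Longrightarrow> admissible (L @ map (\<lambda>x. (f x, 0)) xs)"
proof (induction xs rule: rev_induct)
  case (snoc x xs)
  then have "admissible ((L @ map (\<lambda>x. (f x, 0)) xs) @ [(f x, 0)])"
    by (intro admissible_snoc) auto
  then show ?case by simp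
qed simp

lemma cluster_count_append: "cluster_count X (L @ R) = cluster_count X L + cluster_count X R"
  by (simp add: cluster_count_def)

lemma cluster_count_add_le_length:
  "X \<noteq> Y \<Longrightarrow> cluster_count X L + cluster_count Y L \<le> length L"
  by (induction L) (auto simp: cluster_count_def)

definition marked_sum :: "(nat \<times> nat \<Rightarrow> bool) \<Rightarrow> (nat \<times> nat) list \<Rightarrow> nat" where
  "marked_sum P L = (\<Sum>r\<leftarrow>L. if P r then snd r else 0)"

definition marked_count :: "(nat \<times> nat \<Rightarrow> bool) \<Rightarrow> (nat \<times> nat) list \<Rightarrow> nat" where
  "marked_count P L = length (filter P L)"

lemma marked_sum_snoc:
  "marked_sum P (L @ [r]) = marked_sum P L + (if P r then snd r else 0)"
  by (simp add: marked_sum_def)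

lemma marked_count_snoc:
  "marked_count P (L @ [r]) = marked_count P L + (if P r then 1 else 0)"
  by (simp add: marked_count_def)

text \<open>The witness m is the largest cluster count; a record appended to a cluster of count m
  raises it, and its helper cluster then has at most length L - m records.\<close>

lemma admissible_marked_sum_invariant:
  assumes "admissible L"
  shows "\<exists>m. (\<forall>X. cluster_count X L \<le> m) \<and> m \<le> length L
           \<and> marked_sum P L \<le> marked_count P L * m \<and> marked_sum P L \<le> m * (length L - m)"
  using assms
proof (induction rule: admissible.induct)
  case admissible_Nil
  then show ?case by (auto simp: cluster_count_def marked_sum_def marked_count_def)
next
  case (admissible_snoc L c Y)
  from admissible_snoc.IH obtain m where m_max: "\<forall>X. cluster_count X L \<le> m"
    and m_len: "m \<le> length L" and sum_count: "marked_sum P L \<le> marked_count P L * m"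
    and sum_m: "marked_sum P L \<le> m * (length L - m)" by blast
  have c_m: "c \<le> m" using admissible_snoc.hyps(2) m_max by (meson le_trans zero_le)
  have count_snoc: "cluster_count X (L @ [(Y, c)]) = cluster_count X L + (if X = Y then 1 else 0)"
    for X by (auto simp: cluster_count_append cluster_count_def)
  show ?case
  proof (cases "cluster_count Y L < m")
    case True
    have "cluster_count X (L @ [(Y, c)]) \<le> m" for X
      using m_max[rule_format, of X] True by (cases "X = Y") (auto simp: count_snoc)
    moreover have "marked_sum P (L @ [(Y, c)]) \<le> marked_count P (L @ [(Y, c)]) * m"
      using sum_count c_m by (auto simp: marked_sum_snoc marked_count_snoc)
    moreover have "marked_sum P (L @ [(Y, c)]) \<le> m * (length (L @ [(Y, c)]) - m)"
      using sum_m c_m m_len by (auto simp: marked_sum_snoc Suc_diff_le)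
    ultimately show ?thesis using m_len by (intro exI[of _ m]) auto
  next
    case False
    then have count_Y: "cluster_count Y L = m" using m_max by (meson le_neq_implies_less)
    have c_rest: "c \<le> length L - m"
    proof (cases "c = 0")
      case False
      then obtain X where "X \<noteq> Y" "c \<le> cluster_count X L" using admissible_snoc.hyps(2) by blast
      then show ?thesis using cluster_count_add_le_length[of X Y L] count_Y by linarith
    qed simp
    have "cluster_count X (L @ [(Y, c)]) \<le> Suc m" for X
      using m_max[rule_format, of X] by (auto simp: count_snoc)
    moreover have "marked_sum P (L @ [(Y, c)]) \<le> marked_count P (L @ [(Y, c)]) * Suc m"
      using sum_count c_m by (auto simp: marked_sum_snoc marked_count_snoc)
    moreover have "marked_sum P (L @ [(Y, c)]) \<le> Suc m * (length (L @ [(Y, c)]) - Suc m)"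
      using sum_m c_rest by (auto simp: marked_sum_snoc)
    ultimately show ?thesis using m_len by (intro exI[of _ "Suc m"]) auto
  qed
qed

lemma admissible_marked_sum_le:
  assumes "admissible L"
  shows "\<exists>u \<le> length L div 2. u \<le> marked_count P L \<and> marked_sum P L \<le> u * (length L - u)"
proof -
  obtain m where m_len: "m \<le> length L" and sum_count: "marked_sum P L \<le> marked_count P L * m"
    and sum_m: "marked_sum P L \<le> m * (length L - m)"
    using admissible_marked_sum_invariant[OF assms, of P] by blast
  let ?t = "marked_count P L" and ?k = "length L"
  have t_k: "?t \<le> ?k" by (simp add: marked_count_def)
  obtain x where x_t: "x \<le> ?t" and sum_x: "marked_sum P L \<le> x * (?k - x)"
  proof (cases "m \<le> ?t")
    case False
    show ?thesis
    proof (cases "?k - ?t \<le> m")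
      case True
      have "m * (?k - m) = (?k - m) * (?k - (?k - m))" using m_len by simp
      then show ?thesis using that[of "?k - m"] True sum_m by (metis le_diff_conv add.commute)
    next
      case False
      then have "?t * m \<le> ?t * (?k - ?t)" by simp
      then show ?thesis using that[of ?t] order_trans[OF sum_count] by blast
    qed
  qed (use that sum_m in blast)
  show ?thesis
  proof (cases "x \<le> ?k div 2")
    case False
    have "(?k - x) * (?k - (?k - x)) = x * (?k - x)" using x_t t_k by simp
    then show ?thesis using False x_t sum_x by (intro exI[of _ "?k - x"]) (auto simp: mult.commute)
  qed (use x_t sum_x in blast)
qed

definition record_value :: "nat \<Rightarrow> real \<Rightarrow> real \<Rightarrow> (nat \<times> nat) list \<Rightarrow> real" where
  "record_value d \<alpha> \<beta> L = (\<Sum>r\<leftarrow>L. min \<alpha> (real (d - snd r) * \<beta>))"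

lemma record_value_append:
  "record_value d \<alpha> \<beta> (L @ R) = record_value d \<alpha> \<beta> L + record_value d \<alpha> \<beta> R"
  by (simp add: record_value_def)

lemma record_value_nonneg: "0 \<le> \<alpha> \<Longrightarrow> 0 \<le> \<beta> \<Longrightarrow> 0 \<le> record_value d \<alpha> \<beta> L"
  unfolding record_value_def by (rule sum_list_nonneg) auto

lemma record_value_unhelped:
  "0 \<le> \<beta> \<Longrightarrow> record_value d \<alpha> \<beta> (map (\<lambda>x. (f x, 0)) xs) \<le> \<alpha> * real (length xs)"
  by (induction xs) (auto simp: record_value_def algebra_simps)

lemma admissible_append_unhelped_set:
  assumes "finite A" "admissible L" "0 \<le> \<beta>"
  obtains R where "admissible (L @ R)" "\<forall>r\<in>set R. snd r = 0" "length R = card A"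
    "\<forall>X. cluster_count X R = card {x \<in> A. fst x = X}"
    "record_value d \<alpha> \<beta> R \<le> \<alpha> * real (card A)"
proof -
  obtain xs where xs: "set xs = A" "distinct xs" using finite_distinct_list[OF assms(1)] by blast
  let ?R = "map (\<lambda>x. (fst x, 0 :: nat)) xs"
  have "cluster_count X ?R = card {x \<in> A. fst x = X}" for X
  proof -
    have "cluster_count X ?R = length (filter (\<lambda>x. fst x = X) xs)"
      by (simp add: cluster_count_def filter_map o_def)
    also have "\<dots> = card {x \<in> A. fst x = X}"
      using xs by (metis distinct_card distinct_filter set_filter)
    finally show ?thesis .
  qed
  moreover have "length ?R = card A" using distinct_card[OF xs(2)] xs(1) by simp
  ultimately show ?thesis
    using that[of ?R] admissible_append_unhelped[OF assms(2), of fst xs]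
      record_value_unhelped[OF assms(3), of d \<alpha> fst xs]
    by auto
qed

lemma record_value_eq:
  fixes \<alpha> \<beta> :: real and L :: "(nat \<times> nat) list"
  assumes "\<forall>r\<in>set L. snd r \<le> d"
  defines "P \<equiv> \<lambda>r. real (d - snd r) * \<beta> < \<alpha>"
  shows "record_value d \<alpha> \<beta> L = \<alpha> * (real (length L) - real (marked_count P L))
      + \<beta> * (real d * real (marked_count P L) - real (marked_sum P L))"
  using assms(1)
proof (induction L)
  case (Cons r L)
  then show ?case
    by (auto simp: P_def record_value_def marked_count_def marked_sum_def min_def of_nat_diff
        algebra_simps)
qed (simp add: record_value_def marked_count_def marked_sum_def)

text \<open>Records with few helpers on the collector's side cost \<alpha>, the others (d - c) \<beta>; the
  combinatorial bound on the helper counts turns this into one of the cut bounds.\<close>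

lemma record_value_ge_cut_bound:
  assumes "admissible L" "length L = k" "\<forall>r\<in>set L. snd r \<le> d"
    and "0 \<le> \<beta>" "\<alpha> \<le> real d * \<beta>"
  shows "\<exists>u \<le> k div 2. cut_bound k d \<alpha> \<beta> u \<le> record_value d \<alpha> \<beta> L"
proof -
  define P where "P = (\<lambda>r :: nat \<times> nat. real (d - snd r) * \<beta> < \<alpha>)"
  obtain u where u_half: "u \<le> k div 2" and u_t: "u \<le> marked_count P L"
    and sum_u: "marked_sum P L \<le> u * (k - u)"
    using admissible_marked_sum_le[OF assms(1), of P] assms(2) by blast
  have sum_u': "real (marked_sum P L) \<le> real u * (real k - real u)"
  proof -
    have "u \<le> k" using u_half by linarith
    then show ?thesis using sum_u by (metis of_nat_diff of_nat_le_iff of_nat_mult)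
  qed
  have "(real (marked_count P L) - real u) * (real d * \<beta> - \<alpha>) \<ge> 0"
    using u_t assms(5) by (intro mult_nonneg_nonneg) auto
  then have "cut_bound k d \<alpha> \<beta> u
      \<le> \<alpha> * (real k - real (marked_count P L))
        + \<beta> * (real d * real (marked_count P L) - real u * (real k - real u))"
    by (simp add: cut_bound_def algebra_simps)
  also have "\<dots> \<le> record_value d \<alpha> \<beta> L"
    using record_value_eq[OF assms(3), of \<alpha> \<beta>] sum_u' assms(2,4)
    by (simp add: P_def mult_left_mono)
  finally show ?thesis using u_half by blast
qed

section \<open>Every cut meets one of the bounds\<close>

lemma card_filter_le_Un3:
  assumes "finite B" "finite C" "finite D" "A \<subseteq> B \<union> C \<union> D"
  shows "card {x \<in> A. P x} \<le> card {x \<in> B. P x} + card {x \<in> C. P x} + card {x \<in> D. P x}"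
proof -
  have "card {x \<in> A. P x} \<le> card ({x \<in> B. P x} \<union> {x \<in> C. P x} \<union> {x \<in> D. P x})"
    using assms by (intro card_mono) auto
  also have "\<dots> \<le> card {x \<in> B. P x} + card {x \<in> C. P x} + card {x \<in> D. P x}"
    by (meson add_le_mono card_Un_le le_trans order_refl)
  finally show ?thesis .
qed

lemma finite_servers[simp]: "finite (servers n s)"
proof (rule finite_subset)
  show "servers n s \<subseteq> {0..s + 1} \<times> {0..fcrs_d n s + fcrs_s0 n s}"
    by (auto simp: servers_def)
qed simp

lemma card_cluster:
  assumes "1 \<le> i" "i \<le> s"
  shows "card {y \<in> servers n s. fst y = i} = fcrs_d n s"
proof -
  have "{y \<in> servers n s. fst y = i} = {i} \<times> {1..fcrs_d n s}"
    using assms by (auto simp: servers_def)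
  then show ?thesis by (simp add: card_cartesian_product)
qed

lemma finite_ifg_nodes[simp]: "finite (ifg_nodes n s fs)"
proof -
  have "ifg_nodes n s fs = {Src, DC} \<union> (\<lambda>(x, t). In x t) ` (servers n s \<times> {..length fs})
      \<union> (\<lambda>(x, t). Out x t) ` (servers n s \<times> {..length fs})"
    by (auto simp: ifg_nodes_def image_iff)
  then show ?thesis by simp
qed

lemma In_in_ifg_nodes: "x \<in> servers n s \<Longrightarrow> t \<le> length fs \<Longrightarrow> In x t \<in> ifg_nodes n s fs"
  by (cases x) (auto simp: ifg_nodes_def)

lemma Out_in_ifg_nodes: "x \<in> servers n s \<Longrightarrow> t \<le> length fs \<Longrightarrow> Out x t \<in> ifg_nodes n s fs"
  by (cases x) (auto simp: ifg_nodes_def)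

lemma DC_in_ifg_nodes: "DC \<in> ifg_nodes n s fs"
  by (simp add: ifg_nodes_def)

locale fcrs_cut =
  fixes n s :: nat and fs :: "(nat \<times> nat \<times> nat) list" and \<alpha> \<beta> :: real
    and K :: "(nat \<times> nat) set" and tc :: nat and S :: "ifg_node set"
  assumes valid: "valid_seq n s fs" and tc_le: "tc \<le> length fs" and K_sub: "K \<subseteq> servers n s"
    and S_sub: "S \<subseteq> ifg_nodes n s fs" and Src_in: "Src \<in> S" and DC_notin: "DC \<notin> S"
    and alpha_nonneg: "0 \<le> \<alpha>" and beta_nonneg: "0 \<le> \<beta>"
    and finite_cut: "cut_value n s fs \<alpha> \<beta> K tc S \<noteq> top"
begin

abbreviation "cap \<equiv> ifg_cap n s fs \<alpha> \<beta> K tc"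
abbreviation "d \<equiv> fcrs_d n s"

lemma finite_S: "finite S"
  using S_sub finite_subset finite_ifg_nodes by blast

lemma cap_across_finite:
  assumes "u \<in> S" "v \<in> ifg_nodes n s fs" "v \<notin> S"
  shows "cap u v \<noteq> top"
proof
  assume "cap u v = top"
  then have "(\<Sum>v\<in>ifg_nodes n s fs - S. cap u v) = top"
    using assms by (subst ennreal_sum_eq_top) auto
  then have "cut_value n s fs \<alpha> \<beta> K tc S = top"
    unfolding cut_value_def using assms(1) finite_S by (subst ennreal_sum_eq_top) auto
  then show False using finite_cut by simp
qed

lemma Out_collector_notin: "x \<in> K \<Longrightarrow> Out x tc \<notin> S"
  using cap_across_finite[of "Out x tc" DC] DC_notin DC_in_ifg_nodes K_sub by auto

lemma In_initial_in: "x \<in> servers n s \<Longrightarrow> In x 0 \<in> S"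
  using cap_across_finite[of Src "In x 0"] Src_in In_in_ifg_nodes[of x n s 0 fs] by auto

lemma event_valid:
  "t < length fs \<Longrightarrow> fs ! t = (r, l, i) \<Longrightarrow> (r, l) \<in> servers n s \<and> 1 \<le> i \<and> i \<le> s \<and> i \<noteq> r"
proof -
  assume "t < length fs" "fs ! t = (r, l, i)"
  then have "(r, l, i) \<in> set fs" by (metis nth_mem)
  then show ?thesis using valid by (auto simp: valid_seq_def valid_event_def)
qed

lemma Out_notin_if_In_notin:
  assumes "x \<in> servers n s" "t < length fs" "fs ! t = (r, l, i)" "x \<noteq> (r, l)"
    and "In x (Suc t) \<notin> S"
  shows "Out x t \<notin> S"
proof
  assume "Out x t \<in> S"
  show False
    using cap_across_finite[OF \<open>Out x t \<in> S\<close> In_in_ifg_nodes[of x n s "Suc t" fs] assms(5)]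
      assms(1-4) by simp
qed

definition "newcomer t = (case fs ! t of (r, l, i) \<Rightarrow> (r, l))"
definition "helper_cluster t = (case fs ! t of (r, l, i) \<Rightarrow> i)"

definition "sink_outs t = {x \<in> servers n s. Out x t \<notin> S}"
definition "cut_storage t = {x \<in> servers n s. Out x t \<notin> S \<and> In x t \<in> S}"
definition "cut_repairs t = {t' \<in> {..<t}. In (newcomer t') (Suc t') \<notin> S}"
definition "sink_helpers t = card {x \<in> sink_outs t. fst x = helper_cluster t}"

definition "partial_cut t = \<alpha> * real (\<Sum>t'\<le>t. card (cut_storage t'))
  + (\<Sum>t'\<in>cut_repairs t. real (d - sink_helpers t') * \<beta>)"

lemma finite_sink_outs[simp]: "finite (sink_outs t)"
  and finite_cut_storage[simp]: "finite (cut_storage t)"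
  by (simp_all add: sink_outs_def cut_storage_def)

lemma sink_helpers_le: "t < length fs \<Longrightarrow> sink_helpers t \<le> d"
proof -
  assume t: "t < length fs"
  obtain r l i where ev: "fs ! t = (r, l, i)" by (metis prod.exhaust)
  have "sink_helpers t \<le> card {y \<in> servers n s. fst y = i}"
    unfolding sink_helpers_def using ev by (intro card_mono) (auto simp: sink_outs_def helper_cluster_def)
  then show ?thesis using card_cluster event_valid[OF t ev] by simp
qed

lemma sink_outs_Suc_subset:
  assumes "t < length fs"
  shows "sink_outs (Suc t)
    \<subseteq> sink_outs t \<union> cut_storage (Suc t) \<union> {x. x = newcomer t \<and> In x (Suc t) \<notin> S}"
proof
  fix x assume "x \<in> sink_outs (Suc t)"
  then have x: "x \<in> servers n s" "Out x (Suc t) \<notin> S" by (auto simp: sink_outs_def)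
  obtain r l i where ev: "fs ! t = (r, l, i)" by (metis prod.exhaust)
  consider "In x (Suc t) \<in> S" | "x = (r, l)" "In x (Suc t) \<notin> S" | "x \<noteq> (r, l)" "In x (Suc t) \<notin> S"
    by blast
  then show "x \<in> sink_outs t \<union> cut_storage (Suc t) \<union> {x. x = newcomer t \<and> In x (Suc t) \<notin> S}"
  proof cases
    case 3
    then show ?thesis
      using Out_notin_if_In_notin[OF x(1) assms ev] x by (auto simp: sink_outs_def)
  qed (use x ev in \<open>auto simp: cut_storage_def newcomer_def\<close>)
qed

lemma partial_cut_Suc:
  "partial_cut (Suc t) = partial_cut t + \<alpha> * real (card (cut_storage (Suc t)))
    + (if In (newcomer t) (Suc t) \<notin> S then real (d - sink_helpers t) * \<beta> else 0)"
proof -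
  have repairs: "cut_repairs (Suc t) = (if In (newcomer t) (Suc t) \<notin> S
      then insert t (cut_repairs t) else cut_repairs t)"
    by (auto simp: cut_repairs_def less_Suc_eq)
  have "t \<notin> cut_repairs t" "finite (cut_repairs t)" by (auto simp: cut_repairs_def)
  then show ?thesis unfolding partial_cut_def repairs by (simp add: algebra_simps)
qed

text \<open>L accounts, cluster by cluster, for the out-nodes on the collector's side at time t,
  at a cost bounded by the cut edges met up to time t.\<close>

definition cut_records :: "nat \<Rightarrow> (nat \<times> nat) list \<Rightarrow> bool" where
  "cut_records t L \<longleftrightarrow> admissible L \<and> (\<forall>r\<in>set L. snd r \<le> d)
     \<and> (\<forall>X. card {x \<in> sink_outs t. fst x = X} \<le> cluster_count X L)
     \<and> card (sink_outs t) \<le> length L \<and> record_value d \<alpha> \<beta> L \<le> partial_cut t"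

lemma cut_records_0: "\<exists>L. cut_records 0 L"
proof -
  obtain R where R: "admissible ([] @ R)" "\<forall>r\<in>set R. snd r = 0" "length R = card (cut_storage 0)"
    "\<forall>X. cluster_count X R = card {x \<in> cut_storage 0. fst x = X}"
    "record_value d \<alpha> \<beta> R \<le> \<alpha> * real (card (cut_storage 0))"
    using admissible_append_unhelped_set[OF finite_cut_storage admissible_Nil beta_nonneg,
        where d = d and \<alpha> = \<alpha>] by blast
  have "sink_outs 0 = cut_storage 0"
    using In_initial_in by (auto simp: sink_outs_def cut_storage_def)
  then show ?thesis
    using R by (intro exI[of _ R]) (auto simp: cut_records_def partial_cut_def cut_repairs_def)
qed

lemma cut_records_Suc:
  assumes t: "t < length fs" and L: "cut_records t L"
  shows "\<exists>L'. cut_records (Suc t) L'"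
proof -
  obtain r l i where ev: "fs ! t = (r, l, i)" by (metis prod.exhaust)
  have ev_valid: "(r, l) \<in> servers n s" "i \<noteq> r" using event_valid[OF t ev] by auto
  have nc: "newcomer t = (r, l)" "helper_cluster t = i" using ev
    by (simp_all add: newcomer_def helper_cluster_def)
  define cut where "cut = (In (r, l) (Suc t) \<notin> S)"
  define E where "E = (if cut then [(r, sink_helpers t)] else [])"
  have "sink_helpers t \<le> cluster_count i L"
    using L nc by (simp add: cut_records_def sink_helpers_def)
  then have adm_E: "admissible (L @ E)"
    using L ev_valid(2) unfolding E_def cut_records_def
    by (auto intro!: admissible_snoc)
  obtain R where R: "admissible ((L @ E) @ R)" "\<forall>r\<in>set R. snd r = 0"
    "length R = card (cut_storage (Suc t))"
    "\<forall>X. cluster_count X R = card {x \<in> cut_storage (Suc t). fst x = X}"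
    "record_value d \<alpha> \<beta> R \<le> \<alpha> * real (card (cut_storage (Suc t)))"
    by (rule admissible_append_unhelped_set[OF finite_cut_storage[of "Suc t"] adm_E beta_nonneg,
          where d = d and \<alpha> = \<alpha>])
  let ?N = "{x. x = newcomer t \<and> In x (Suc t) \<notin> S}"
  have N_eq: "?N = (if cut then {(r, l)} else {})" using nc by (auto simp: cut_def)
  have N_card: "card ?N \<le> length E" unfolding N_eq by (simp add: E_def)
  have N_count: "card {x \<in> ?N. fst x = X} \<le> cluster_count X E" for X
  proof -
    have "{x \<in> ?N. fst x = X} = (if cut \<and> r = X then {(r, l)} else {})"
      unfolding N_eq by auto
    then show ?thesis by (simp add: E_def cluster_count_def)
  qed
  have "card {x \<in> sink_outs (Suc t). fst x = X} \<le> cluster_count X (L @ E @ R)" for X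
  proof -
    have "card {x \<in> sink_outs (Suc t). fst x = X} \<le> card {x \<in> sink_outs t. fst x = X}
        + card {x \<in> cut_storage (Suc t). fst x = X} + card {x \<in> ?N. fst x = X}"
      by (rule card_filter_le_Un3[OF _ _ _ sink_outs_Suc_subset[OF t], where P = "\<lambda>x. fst x = X"])
        (simp_all add: N_eq)
    moreover have "card {x \<in> sink_outs t. fst x = X} \<le> cluster_count X L"
      using L by (simp add: cut_records_def)
    ultimately show ?thesis using N_count[of X] R(4)[rule_format, of X] by (simp add: cluster_count_append)
  qed
  moreover have "card (sink_outs (Suc t)) \<le> length (L @ E @ R)"
  proof -
    have "card {x \<in> sink_outs (Suc t). True} \<le> card {x \<in> sink_outs t. True}
        + card {x \<in> cut_storage (Suc t). True} + card {x \<in> ?N. True}"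
      by (rule card_filter_le_Un3[OF _ _ _ sink_outs_Suc_subset[OF t], where P = "\<lambda>x. True"])
        (simp_all add: N_eq)
    moreover have "card (sink_outs t) \<le> length L" using L by (simp add: cut_records_def)
    ultimately show ?thesis using N_card R(3) by simp
  qed
  moreover have "record_value d \<alpha> \<beta> (L @ E @ R) \<le> partial_cut (Suc t)"
  proof -
    have "record_value d \<alpha> \<beta> E \<le> (if cut then real (d - sink_helpers t) * \<beta> else 0)"
      by (simp add: E_def record_value_def)
    moreover have "record_value d \<alpha> \<beta> L \<le> partial_cut t" using L by (simp add: cut_records_def)
    ultimately show ?thesis
      using R(5) nc by (simp add: record_value_append partial_cut_Suc cut_def)
  qed
  moreover have "\<forall>r\<in>set (L @ E @ R). snd r \<le> d"
    using L R(2) sink_helpers_le[OF t] by (auto simp: E_def cut_records_def)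
  ultimately show ?thesis
    using R(1) by (intro exI[of _ "L @ E @ R"]) (simp add: cut_records_def)
qed

lemma cut_records_exist: "t \<le> length fs \<Longrightarrow> \<exists>L. cut_records t L"
proof (induction t)
  case (Suc t)
  then show ?case using cut_records_Suc by (auto simp: Suc_le_eq)
qed (rule cut_records_0)

definition "inflow v = (\<Sum>u\<in>S. cap u v)"

lemma cut_value_eq_inflow: "cut_value n s fs \<alpha> \<beta> K tc S = (\<Sum>v\<in>ifg_nodes n s fs - S. inflow v)"
  unfolding cut_value_def inflow_def by (rule sum.swap)

lemma inflow_ge: "u \<in> S \<Longrightarrow> cap u v \<le> inflow v"
  unfolding inflow_def by (rule member_le_sum) (simp_all add: finite_S)

lemma inflow_storage_ge:
  assumes "x \<in> cut_storage t" "t \<le> length fs"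
  shows "ennreal \<alpha> \<le> inflow (Out x t)"
proof -
  have "In x t \<in> S" "x \<in> servers n s" using assms(1) by (auto simp: cut_storage_def)
  moreover have "cap (In x t) (Out x t) = ennreal \<alpha>" if "x \<in> servers n s"
    using that assms(2) by simp
  ultimately show ?thesis using inflow_ge by metis
qed

lemma newcomer_in_servers:
  assumes "t < length fs"
  shows "newcomer t \<in> servers n s"
proof -
  obtain r l i where ev: "fs ! t = (r, l, i)" by (metis prod.exhaust)
  show ?thesis using event_valid[OF assms ev] ev by (simp add: newcomer_def)
qed

lemma inflow_newcomer_ge:
  assumes t: "t < length fs"
  shows "ennreal (real (d - sink_helpers t) * \<beta>) \<le> inflow (In (newcomer t) (Suc t))"
proof -
  obtain r l i where ev: "fs ! t = (r, l, i)" by (metis prod.exhaust)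
  have ev_valid: "(r, l) \<in> servers n s" "1 \<le> i" "i \<le> s" "i \<noteq> r" using event_valid[OF t ev] by auto
  define H where "H = {y \<in> servers n s. fst y = i \<and> Out y t \<in> S}"
  have "{y \<in> servers n s. fst y = i} = H \<union> {x \<in> sink_outs t. fst x = i}"
    by (auto simp: H_def sink_outs_def)
  then have "card {y \<in> servers n s. fst y = i} = card H + card {x \<in> sink_outs t. fst x = i}"
    by (simp add: card_Un_disjoint H_def sink_outs_def disjoint_iff)
  moreover have "sink_helpers t = card {x \<in> sink_outs t. fst x = i}"
    using ev by (simp add: sink_helpers_def helper_cluster_def)
  ultimately have "d - sink_helpers t = card H"
    using card_cluster[OF ev_valid(2,3), of n] by simp
  then have "ennreal (real (d - sink_helpers t) * \<beta>) = (\<Sum>y\<in>H. ennreal \<beta>)"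
    using beta_nonneg by (simp add: ennreal_mult ennreal_of_nat_eq_real_of_nat)
  also have "\<dots> = (\<Sum>y\<in>H. cap (Out y t) (In (newcomer t) (Suc t)))"
    using t ev ev_valid by (intro sum.cong) (auto simp: H_def newcomer_def)
  also have "\<dots> = (\<Sum>u\<in>(\<lambda>y. Out y t) ` H. cap u (In (newcomer t) (Suc t)))"
    by (simp add: sum.reindex inj_on_def)
  also have "\<dots> \<le> inflow (In (newcomer t) (Suc t))"
    unfolding inflow_def by (rule sum_mono2[OF finite_S]) (auto simp: H_def)
  finally show ?thesis .
qed

lemma partial_cut_le_cut_value: "ennreal (partial_cut tc) \<le> cut_value n s fs \<alpha> \<beta> K tc S"
proof -
  define Sig where "Sig = (SIGMA t:{..tc}. cut_storage t)"
  let ?storage_nodes = "(\<lambda>(t, x). Out x t) ` Sig"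
  let ?newcomer_nodes = "(\<lambda>t. In (newcomer t) (Suc t)) ` cut_repairs tc"
  have storage: "ennreal (\<alpha> * real (\<Sum>t\<le>tc. card (cut_storage t))) \<le> (\<Sum>v\<in>?storage_nodes. inflow v)"
  proof -
    have "card Sig = (\<Sum>t\<le>tc. card (cut_storage t))" by (simp add: Sig_def card_SigmaI)
    then have "ennreal (\<alpha> * real (\<Sum>t\<le>tc. card (cut_storage t))) = ennreal (\<alpha> * real (card Sig))"
      by simp
    also have "\<dots> = (\<Sum>p\<in>Sig. ennreal \<alpha>)"
      using alpha_nonneg by (simp add: ennreal_mult ennreal_of_nat_eq_real_of_nat mult.commute)
    also have "\<dots> \<le> (\<Sum>p\<in>Sig. inflow (Out (snd p) (fst p)))"
      using tc_le by (intro sum_mono inflow_storage_ge) (auto simp: Sig_def)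
    also have "\<dots> = (\<Sum>v\<in>?storage_nodes. inflow v)"
      by (subst sum.reindex) (auto simp: inj_on_def case_prod_beta)
    finally show ?thesis .
  qed
  have repairs: "ennreal (\<Sum>t\<in>cut_repairs tc. real (d - sink_helpers t) * \<beta>)
      \<le> (\<Sum>v\<in>?newcomer_nodes. inflow v)"
  proof -
    have "ennreal (\<Sum>t\<in>cut_repairs tc. real (d - sink_helpers t) * \<beta>)
        = (\<Sum>t\<in>cut_repairs tc. ennreal (real (d - sink_helpers t) * \<beta>))"
      using beta_nonneg by (simp add: sum_ennreal)
    also have "\<dots> \<le> (\<Sum>t\<in>cut_repairs tc. inflow (In (newcomer t) (Suc t)))"
      using tc_le by (intro sum_mono inflow_newcomer_ge) (auto simp: cut_repairs_def)
    also have "\<dots> = (\<Sum>v\<in>?newcomer_nodes. inflow v)"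
      by (subst sum.reindex) (auto simp: inj_on_def)
    finally show ?thesis .
  qed
  have "?storage_nodes \<subseteq> ifg_nodes n s fs - S"
    using tc_le by (auto simp: Sig_def cut_storage_def intro: Out_in_ifg_nodes)
  moreover have "?newcomer_nodes \<subseteq> ifg_nodes n s fs - S"
    using tc_le by (auto simp: cut_repairs_def intro!: In_in_ifg_nodes newcomer_in_servers)
  ultimately have "(\<Sum>v\<in>?storage_nodes \<union> ?newcomer_nodes. inflow v)
      \<le> (\<Sum>v\<in>ifg_nodes n s fs - S. inflow v)"
    by (intro sum_mono2) auto
  moreover have "(\<Sum>v\<in>?storage_nodes \<union> ?newcomer_nodes. inflow v)
      = (\<Sum>v\<in>?storage_nodes. inflow v) + (\<Sum>v\<in>?newcomer_nodes. inflow v)"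
    by (rule sum.union_disjoint) (auto simp: Sig_def cut_repairs_def)
  moreover have "ennreal (partial_cut tc) = ennreal (\<alpha> * real (\<Sum>t\<le>tc. card (cut_storage t)))
      + ennreal (\<Sum>t\<in>cut_repairs tc. real (d - sink_helpers t) * \<beta>)"
    using alpha_nonneg beta_nonneg by (simp add: partial_cut_def ennreal_plus sum_nonneg)
  ultimately show ?thesis
    using add_mono[OF storage repairs] cut_value_eq_inflow by (metis order_trans)
qed

lemma cut_value_ge_cut_bound:
  assumes "card K = k" "\<alpha> \<le> real d * \<beta>"
  shows "\<exists>u \<le> k div 2. ennreal (cut_bound k d \<alpha> \<beta> u) \<le> cut_value n s fs \<alpha> \<beta> K tc S"
proof -
  obtain L where L: "cut_records tc L" using cut_records_exist[OF tc_le] by blast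
  have "K \<subseteq> sink_outs tc" using K_sub Out_collector_notin by (auto simp: sink_outs_def)
  then have "k \<le> card (sink_outs tc)" using assms(1) card_mono[OF finite_sink_outs] by blast
  then have "length (take k L) = k" using L by (simp add: cut_records_def)
  moreover have "admissible (take k L)" "\<forall>r\<in>set (take k L). snd r \<le> d"
    using L by (auto simp: cut_records_def intro: admissible_take dest: in_set_takeD)
  ultimately obtain u where u: "u \<le> k div 2"
    "cut_bound k d \<alpha> \<beta> u \<le> record_value d \<alpha> \<beta> (take k L)"
    using record_value_ge_cut_bound[OF _ _ _ beta_nonneg assms(2)] by blast
  have "record_value d \<alpha> \<beta> (take k L) \<le> record_value d \<alpha> \<beta> L"
    using record_value_append[of d \<alpha> \<beta> "take k L" "drop k L"]
      record_value_nonneg[OF alpha_nonneg beta_nonneg, of d "drop k L"] by simp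
  also have "\<dots> \<le> partial_cut tc" using L by (simp add: cut_records_def)
  finally have "ennreal (cut_bound k d \<alpha> \<beta> u) \<le> ennreal (partial_cut tc)"
    using u(2) by (intro ennreal_leI) simp
  then show ?thesis using u(1) partial_cut_le_cut_value order_trans by blast
qed

end

lemma fcrs_feasible_if_cut_bounds:
  assumes "0 \<le> \<alpha>" "0 \<le> \<beta>" "\<alpha> \<le> real (fcrs_d n s) * \<beta>"
    and "\<forall>u \<le> k div 2. M \<le> cut_bound k (fcrs_d n s) \<alpha> \<beta> u"
  shows "fcrs_feasible n k s M \<alpha> \<beta>"
  unfolding fcrs_feasible_def min_cut_def
proof (intro allI impI INF_greatest)
  fix fs K tc S
  assume valid: "valid_seq n s fs" and tc_le: "tc \<le> length fs" and K: "K \<subseteq> servers n s" "card K = k"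
    and S: "S \<in> {S. S \<subseteq> ifg_nodes n s fs \<and> Src \<in> S \<and> DC \<notin> S}"
  show "ennreal M \<le> cut_value n s fs \<alpha> \<beta> K tc S"
  proof (cases "cut_value n s fs \<alpha> \<beta> K tc S = top")
    case False
    then obtain u where "u \<le> k div 2"
      "ennreal (cut_bound k (fcrs_d n s) \<alpha> \<beta> u) \<le> cut_value n s fs \<alpha> \<beta> K tc S"
      using fcrs_cut.cut_value_ge_cut_bound[OF fcrs_cut.intro[OF valid tc_le K(1) _ _ _ assms(1,2) False]
          K(2) assms(3)] S
      by blast
    then show ?thesis using assms(4) by (meson ennreal_leI order_trans)
  qed simp
qed

section \<open>A repair chain attaining the i-th bound\<close>

locale repair_chain =
  fixes n s k i :: nat
  assumes two_le_s: "2 \<le> s" and i_half: "2 * i \<le> k" and k_le_d: "k \<le> fcrs_d n s"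
begin

text \<open>Servers (2,1), ..., (2,i) fail in turn and are repaired from cluster 1; at time i the
  collector reads (1,1), ..., (1,k-i) and the i newcomers.  Separating these servers from the
  source cuts k - i storage edges and, into every newcomer, the d - (k - i) helper edges from
  the cluster-1 servers that the collector does not read.\<close>

definition "chain_failures = map (\<lambda>t. (2 :: nat, Suc t, 1 :: nat)) [0..<i]"
definition "chain_collector = ({1 :: nat} \<times> {1..k - i}) \<union> ({2} \<times> {1..i})"

fun collector_side :: "ifg_node \<Rightarrow> bool" where
  "collector_side DC = True"
| "collector_side Src = False"
| "collector_side (Out (a, b) t) = ((a = 1 \<and> 1 \<le> b \<and> b \<le> k - i) \<or> (a = 2 \<and> 1 \<le> b \<and> b \<le> t))"
| "collector_side (In (a, b) t) =
     ((a = 1 \<and> 1 \<le> b \<and> b \<le> k - i \<and> 1 \<le> t) \<or> (a = 2 \<and> 1 \<le> b \<and> b \<le> t))"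

definition "storage_edges = (\<lambda>b. (In (1, b) 0, Out (1, b) 0)) ` {1..k - i}"
definition "helper_edges =
  (\<lambda>(m, j). (Out (1, m) (j - 1), In (2, j) j)) ` ({k - i + 1..fcrs_d n s} \<times> {1..i})"

lemma length_chain_failures[simp]: "length chain_failures = i"
  by (simp add: chain_failures_def)

lemma chain_failures_nth:
  assumes "1 \<le> t" "t \<le> i"
  shows "chain_failures ! (t - 1) = (2, t, 1)"
proof -
  have "t - 1 < i" using assms by simp
  then show ?thesis using assms by (simp add: chain_failures_def)
qed

lemma chain_failures_valid: "valid_seq n s chain_failures"
  unfolding valid_seq_def valid_event_def chain_failures_def
  using two_le_s i_half k_le_d by (auto simp: servers_def)

lemma chain_collector_servers: "chain_collector \<subseteq> servers n s"
  using i_half k_le_d two_le_s by (auto simp: chain_collector_def servers_def)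

lemma card_chain_collector: "card chain_collector = k"
proof -
  have "card chain_collector = card ({1::nat} \<times> {1..k - i}) + card ({2::nat} \<times> {1..i})"
    unfolding chain_collector_def by (rule card_Un_disjoint) auto
  then show ?thesis using i_half by (simp add: card_cartesian_product)
qed

lemma cluster_servers: "a \<in> {1, 2} \<Longrightarrow> 1 \<le> b \<Longrightarrow> b \<le> fcrs_d n s \<Longrightarrow> (a, b) \<in> servers n s"
  using two_le_s by (auto simp: servers_def)

lemma cap_into_collector_side:
  assumes "u \<in> ifg_nodes n s chain_failures" "\<not> collector_side u"
    and "v \<in> ifg_nodes n s chain_failures" "collector_side v"
    and "ifg_cap n s chain_failures \<alpha> \<beta> chain_collector i u v \<noteq> 0"
  shows "(u, v) \<in> storage_edges \<union> helper_edges"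
proof (cases u)
  case Src
  then show ?thesis using assms by (cases v) (auto simp: servers_def)
next
  case DC
  then show ?thesis using assms by (cases v) auto
next
  case (In x t)
  obtain a b where x: "x = (a, b)" by (cases x)
  show ?thesis
  proof (cases v)
    case (Out y t')
    then have "y = x" "t' = t" using assms In by (auto split: if_splits)
    then show ?thesis
      using assms(2,4) In Out x by (cases "a = 1 \<and> 1 \<le> b \<and> b \<le> k - i") (auto simp: storage_edges_def)
  qed (use assms In in auto)
next
  case (Out y t')
  obtain a b where y: "y = (a, b)" by (cases y)
  show ?thesis
  proof (cases v)
    case DC
    then have "y \<in> chain_collector" "t' = i" using assms Out by (auto split: if_splits)
    then show ?thesis using assms(2) Out y by (auto simp: chain_collector_def)
  next
    case (In x t)
    have edge: "x \<in> servers n s" "y \<in> servers n s" "1 \<le> t" "t \<le> i" "t' = t - 1"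
      using assms(5) Out In by (auto split: if_splits)
    have ev: "chain_failures ! (t - 1) = (2, t, 1)" using chain_failures_nth edge by simp
    show ?thesis
    proof (cases "x = (2, t)")
      case True
      then have "a = 1" using assms(5) Out In edge ev y by (auto split: if_splits)
      moreover have "b \<le> fcrs_d n s" "1 \<le> b"
        using edge(2) y \<open>a = 1\<close> two_le_s by (auto simp: servers_def)
      moreover have "\<not> b \<le> k - i" using assms(2) Out y \<open>a = 1\<close> \<open>1 \<le> b\<close> by auto
      ultimately show ?thesis using Out In y True edge by (force simp: helper_edges_def)
    next
      case False
      then have "y = x" using assms(5) Out In edge ev by (auto split: if_splits)
      then show ?thesis using assms(2,4) Out In y False edge by (cases x) auto
    qed
  qed (use assms Out in auto)
qed

lemma sum_cap_storage_edges:
  assumes "0 \<le> \<alpha>"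
  shows "(\<Sum>(u, v)\<in>storage_edges. ifg_cap n s chain_failures \<alpha> \<beta> chain_collector i u v)
    = ennreal (real (k - i) * \<alpha>)"
proof -
  have "(\<Sum>(u, v)\<in>storage_edges. ifg_cap n s chain_failures \<alpha> \<beta> chain_collector i u v)
      = (\<Sum>b\<in>{1..k - i}. ifg_cap n s chain_failures \<alpha> \<beta> chain_collector i (In (1, b) 0) (Out (1, b) 0))"
    unfolding storage_edges_def by (subst sum.reindex) (auto simp: inj_on_def)
  also have "\<dots> = (\<Sum>b\<in>{1..k - i}. ennreal \<alpha>)"
    using k_le_d by (intro sum.cong) (auto simp: cluster_servers)
  also have "\<dots> = ennreal (real (k - i) * \<alpha>)"
    using assms by (simp add: ennreal_mult ennreal_of_nat_eq_real_of_nat)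
  finally show ?thesis .
qed

lemma sum_cap_helper_edges:
  assumes "0 \<le> \<beta>"
  shows "(\<Sum>(u, v)\<in>helper_edges. ifg_cap n s chain_failures \<alpha> \<beta> chain_collector i u v)
    = ennreal (real ((fcrs_d n s - (k - i)) * i) * \<beta>)"
proof -
  let ?I = "{k - i + 1..fcrs_d n s} \<times> {1..i}"
  have "(\<Sum>(u, v)\<in>helper_edges. ifg_cap n s chain_failures \<alpha> \<beta> chain_collector i u v)
      = (\<Sum>(m, j)\<in>?I. ifg_cap n s chain_failures \<alpha> \<beta> chain_collector i
            (Out (1, m) (j - 1)) (In (2, j) j))"
    unfolding helper_edges_def by (subst sum.reindex) (auto simp: inj_on_def case_prod_beta)
  also have "\<dots> = (\<Sum>q\<in>?I. ennreal \<beta>)"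
  proof (rule sum.cong)
    fix q assume "q \<in> ?I"
    then obtain m j where q: "q = (m, j)" "1 \<le> m" "m \<le> fcrs_d n s" "1 \<le> j" "j \<le> i" by auto
    moreover have "(2, j) \<in> servers n s" using q i_half k_le_d by (intro cluster_servers) auto
    ultimately show "(case q of (m, j) \<Rightarrow> ifg_cap n s chain_failures \<alpha> \<beta> chain_collector i
        (Out (1, m) (j - 1)) (In (2, j) j)) = ennreal \<beta>"
      using chain_failures_nth[of j] by (simp add: cluster_servers)
  qed simp
  also have "\<dots> = ennreal (real ((fcrs_d n s - (k - i)) * i) * \<beta>)"
    using assms by (simp add: ennreal_mult ennreal_of_nat_eq_real_of_nat card_cartesian_product)
  finally show ?thesis .
qed

lemma min_cut_chain_le:
  assumes "0 \<le> \<alpha>" "0 \<le> \<beta>"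
  shows "min_cut n s chain_failures \<alpha> \<beta> chain_collector i \<le> ennreal (cut_bound k (fcrs_d n s) \<alpha> \<beta> i)"
proof -
  let ?V = "ifg_nodes n s chain_failures"
  let ?c = "\<lambda>(u, v). ifg_cap n s chain_failures \<alpha> \<beta> chain_collector i u v"
  define S where "S = {v \<in> ?V. \<not> collector_side v}"
  have "min_cut n s chain_failures \<alpha> \<beta> chain_collector i
      \<le> cut_value n s chain_failures \<alpha> \<beta> chain_collector i S"
    unfolding min_cut_def by (rule INF_lower) (auto simp: S_def ifg_nodes_def)
  also have "\<dots> = (\<Sum>p\<in>S \<times> (?V - S). ?c p)"
    unfolding cut_value_def by (simp add: sum.cartesian_product)
  also have "\<dots> = (\<Sum>p\<in>(S \<times> (?V - S)) \<inter> (storage_edges \<union> helper_edges). ?c p)"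
    using cap_into_collector_side by (intro sum.mono_neutral_right) (auto simp: S_def)
  also have "\<dots> \<le> (\<Sum>p\<in>storage_edges \<union> helper_edges. ?c p)"
    by (intro sum_mono2) (auto simp: storage_edges_def helper_edges_def)
  also have "\<dots> = (\<Sum>p\<in>storage_edges. ?c p) + (\<Sum>p\<in>helper_edges. ?c p)"
    by (rule sum.union_disjoint) (auto simp: storage_edges_def helper_edges_def)
  also have "\<dots> = ennreal (real (k - i) * \<alpha> + real ((fcrs_d n s - (k - i)) * i) * \<beta>)"
    using assms by (simp add: sum_cap_storage_edges sum_cap_helper_edges ennreal_plus)
  also have "real (k - i) * \<alpha> + real ((fcrs_d n s - (k - i)) * i) * \<beta> = cut_bound k (fcrs_d n s) \<alpha> \<beta> i"
  proof -
    have "real (k - i) = real k - real i" "real (fcrs_d n s - (k - i)) = real (fcrs_d n s) - real k + real i"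
      using i_half k_le_d by (simp_all add: of_nat_diff)
    then show ?thesis unfolding cut_bound_def of_nat_mult by (simp add: algebra_simps)
  qed
  finally show ?thesis .
qed

lemma fcrs_feasible_imp_le_cut_bound:
  assumes "fcrs_feasible n k s M \<alpha> \<beta>" "0 \<le> \<alpha>" "0 \<le> \<beta>"
  shows "M \<le> cut_bound k (fcrs_d n s) \<alpha> \<beta> i"
proof -
  have "ennreal M \<le> min_cut n s chain_failures \<alpha> \<beta> chain_collector i"
    using assms(1) chain_failures_valid chain_collector_servers card_chain_collector
    unfolding fcrs_feasible_def by simp
  also have "\<dots> \<le> ennreal (cut_bound k (fcrs_d n s) \<alpha> \<beta> i)"
    by (rule min_cut_chain_le[OF assms(2,3)])
  finally have "ennreal M \<le> ennreal (cut_bound k (fcrs_d n s) \<alpha> \<beta> i)" .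
  moreover have "0 \<le> cut_bound k (fcrs_d n s) \<alpha> \<beta> i"
    unfolding cut_bound_def using assms(2,3) i_half k_le_d
    by (intro add_nonneg_nonneg mult_nonneg_nonneg) auto
  ultimately show ?thesis by (simp add: ennreal_le_iff)
qed

end

section \<open>The thresholds\<close>

lemma unimodal_min:
  fixes h :: "nat \<Rightarrow> 'a :: linorder"
  assumes dec: "\<And>u. u < i \<Longrightarrow> h (Suc u) \<le> h u"
    and inc: "\<And>u. i \<le> u \<Longrightarrow> u < N \<Longrightarrow> h u \<le> h (Suc u)"
    and "u \<le> N"
  shows "h i \<le> h u"
proof (cases "u \<le> i")
  case True
  then show ?thesis
    by (induction rule: inc_induct) (use dec order_trans in blast)+
next
  case False
  then have "i \<le> u" by simp
  then show ?thesis using \<open>u \<le> N\<close>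
    by (induction rule: dec_induct) (auto intro: order_trans[OF _ inc])
qed

lemma cut_bound_Suc:
  "cut_bound k d \<alpha> \<beta> (Suc u)
     = cut_bound k d \<alpha> \<beta> u + ((real d - real k + 2 * real u + 1) * \<beta> - \<alpha>)"
  by (simp add: cut_bound_def algebra_simps)

text \<open>The increments of the cut bound grow with u, so the bound is minimal at i as soon as
  the increment into i is nonpositive and the one out of i is nonnegative.\<close>

lemma cut_bound_min:
  assumes "0 \<le> \<beta>" "u \<le> N"
    and below: "1 \<le> i \<Longrightarrow> (real d - real k + 2 * real i - 1) * \<beta> \<le> \<alpha>"
    and above: "i < N \<Longrightarrow> \<alpha> \<le> (real d - real k + 2 * real i + 1) * \<beta>"
  shows "cut_bound k d \<alpha> \<beta> i \<le> cut_bound k d \<alpha> \<beta> u"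
proof (rule unimodal_min[OF _ _ \<open>u \<le> N\<close>])
  fix v assume "v < i"
  then have "(real d - real k + 2 * real v + 1) * \<beta> \<le> (real d - real k + 2 * real i - 1) * \<beta>"
    using assms(1) by (intro mult_right_mono) auto
  then show "cut_bound k d \<alpha> \<beta> (Suc v) \<le> cut_bound k d \<alpha> \<beta> v"
    using below \<open>v < i\<close> by (simp add: cut_bound_Suc)
next
  fix v assume "i \<le> v" "v < N"
  then have "(real d - real k + 2 * real i + 1) * \<beta> \<le> (real d - real k + 2 * real v + 1) * \<beta>"
    using assms(1) by (intro mult_right_mono) auto
  then show "cut_bound k d \<alpha> \<beta> v \<le> cut_bound k d \<alpha> \<beta> (Suc v)"
    using above \<open>i \<le> v\<close> \<open>v < N\<close> by (simp add: cut_bound_Suc)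
qed

definition tight_storage :: "real \<Rightarrow> nat \<Rightarrow> nat \<Rightarrow> real \<Rightarrow> nat \<Rightarrow> real" where
  "tight_storage M k d \<beta> i = (M - real i * (real d - real k + real i) * \<beta>) / (real k - real i)"

lemma cut_bound_tight_storage:
  "i < k \<Longrightarrow> cut_bound k d (tight_storage M k d \<beta> i) \<beta> i = M"
  by (simp add: cut_bound_def tight_storage_def)

text \<open>All thresholds f(i) have the shape M d / (i (d - k + i) + (k - i) c): at that bandwidth
  the storage making the i-th cut bound tight equals c \<beta>.\<close>

lemma threshold_le_iff:
  fixes M \<gamma> c :: real
  assumes "i < k" "k \<le> d" "0 < c"
  shows "M * real d / (real i * (real d - real k + real i) + (real k - real i) * c) \<le> \<gamma>
     \<longleftrightarrow> tight_storage M k d (\<gamma> / real d) i \<le> c * (\<gamma> / real d)"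
proof -
  let ?T = "real i * (real d - real k + real i) + (real k - real i) * c"
  have T_pos: "0 < ?T" using assms by (intro add_nonneg_pos mult_nonneg_nonneg mult_pos_pos) auto
  have d_pos: "0 < real d" using assms by linarith
  have "M * real d / ?T \<le> \<gamma> \<longleftrightarrow> M \<le> \<gamma> / real d * ?T"
    using T_pos d_pos by (simp add: divide_le_eq field_simps)
  also have "\<dots> \<longleftrightarrow> M - real i * (real d - real k + real i) * (\<gamma> / real d)
      \<le> (real k - real i) * (c * (\<gamma> / real d))"
  proof -
    have "\<gamma> / real d * ?T = real i * (real d - real k + real i) * (\<gamma> / real d)
        + (real k - real i) * (c * (\<gamma> / real d))"
      by (simp add: algebra_simps diff_divide_distrib)
    then show ?thesis by linarith
  qed
  also have "\<dots> \<longleftrightarrow> tight_storage M k d (\<gamma> / real d) i \<le> c * (\<gamma> / real d)"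
    using assms(1) by (simp add: tight_storage_def divide_le_eq mult.commute)
  finally show ?thesis .
qed

lemma threshold_pos:
  fixes M c :: real
  assumes "0 < M" "i < k" "k \<le> d" "0 < c"
  shows "0 < M * real d / (real i * (real d - real k + real i) + (real k - real i) * c)"
  using assms by (intro divide_pos_pos mult_pos_pos add_nonneg_pos mult_nonneg_nonneg) auto

lemma fcrs_f_below_half:
  fixes n s :: nat
  assumes "i < k div 2"
  defines "d \<equiv> fcrs_d n s"
  shows "fcrs_f n k s M i = M * real d
     / (real i * (real d - real k + real i) + (real k - real i) * (real d - real k + 2 * real i + 1))"
proof -
  have "(2 * real k - real i - 1) * real i + real k * (real d - real k + 1)
      = real i * (real d - real k + real i) + (real k - real i) * (real d - real k + 2 * real i + 1)"
    by (simp add: algebra_simps)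
  then show ?thesis using assms by (simp add: fcrs_f_def Let_def d_def)
qed

lemma fcrs_f_pred:
  fixes n s :: nat
  assumes "1 \<le> i" "i \<le> k div 2"
  defines "d \<equiv> fcrs_d n s"
  shows "fcrs_f n k s M (i - 1) = M * real d
     / (real i * (real d - real k + real i) + (real k - real i) * (real d - real k + 2 * real i - 1))"
proof -
  have "real (i - 1) * (real d - real k + real (i - 1)) + (real k - real (i - 1))
        * (real d - real k + 2 * real (i - 1) + 1)
      = real i * (real d - real k + real i) + (real k - real i) * (real d - real k + 2 * real i - 1)"
    using assms(1) by (simp add: of_nat_diff algebra_simps)
  then show ?thesis using fcrs_f_below_half[of "i - 1" k n s M] assms by (simp add: d_def)
qed

lemma fcrs_f_half:
  fixes n s k :: nat
  defines "d \<equiv> fcrs_d n s" and "h \<equiv> k div 2"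
  shows "fcrs_f n k s M h
     = M * real d / (real h * (real d - real k + real h) + (real k - real h) * real d)"
proof -
  have "(k + 1) div 2 = k - h" unfolding h_def by linarith
  then have ceil: "real ((k + 1) div 2) = real k - real h" by (simp add: h_def of_nat_diff)
  show ?thesis
    unfolding fcrs_f_def Let_def ceil by (simp add: d_def h_def algebra_simps)
qed

lemma cut_bound_le_iff: "i < k \<Longrightarrow> cut_bound k d \<alpha> \<beta> i \<le> cut_bound k d \<alpha>' \<beta> i \<longleftrightarrow> \<alpha> \<le> \<alpha>'"
  by (simp add: cut_bound_def)

lemma tight_storage_cut_bounds:
  fixes n s k i :: nat and M \<gamma> :: real
  defines "d \<equiv> fcrs_d n s"
  defines "\<beta> \<equiv> \<gamma> / real d"
  defines "\<alpha> \<equiv> tight_storage M k d \<beta> i"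
  assumes "1 \<le> k" "k \<le> d" "0 < M" "i \<le> k div 2"
    and lower: "fcrs_f n k s M i \<le> \<gamma>" and upper: "1 \<le> i \<Longrightarrow> \<gamma> < fcrs_f n k s M (i - 1)"
  shows "0 \<le> \<beta>" "\<alpha> \<le> real d * \<beta>" "0 \<le> \<alpha>" "\<forall>u \<le> k div 2. M \<le> cut_bound k d \<alpha> \<beta> u"
proof -
  have i_k: "i < k" using assms(4,7) by linarith
  have above: "\<alpha> \<le> (real d - real k + 2 * real i + 1) * \<beta>" if "i < k div 2"
    using threshold_le_iff[OF i_k assms(5), of "real d - real k + 2 * real i + 1" M \<gamma>]
      lower fcrs_f_below_half[OF that] assms(5)
    by (simp add: d_def \<alpha>_def \<beta>_def mult.commute)
  have below: "(real d - real k + 2 * real i - 1) * \<beta> \<le> \<alpha>" if "1 \<le> i"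
    using threshold_le_iff[OF i_k assms(5), of "real d - real k + 2 * real i - 1" M \<gamma>]
      upper[OF that] fcrs_f_pred[OF that assms(7)] assms(5) that
    by (simp add: d_def \<alpha>_def \<beta>_def mult.commute)
  have at_half: "\<alpha> \<le> real d * \<beta>" if "i = k div 2"
    using threshold_le_iff[OF i_k assms(5), of "real d" M \<gamma>] lower fcrs_f_half[where n = n and s = s and k = k and M = M] that assms(4,5)
    by (simp add: d_def \<alpha>_def \<beta>_def mult.commute)
  have "0 < fcrs_f n k s M i"
  proof (cases "i < k div 2")
    case True
    then show ?thesis using threshold_pos[OF assms(6) i_k assms(5)] fcrs_f_below_half[OF True] assms(5)
      by (simp add: d_def)
  next
    case False
    then have "i = k div 2" using assms(7) by simp
    then show ?thesis using threshold_pos[OF assms(6) i_k assms(5)] fcrs_f_half[where n = n and s = s and k = k and M = M] assms(4,5)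
      by (simp add: d_def)
  qed
  then show beta_nonneg: "0 \<le> \<beta>" using lower by (simp add: \<beta>_def)
  show "\<alpha> \<le> real d * \<beta>"
  proof (cases "i < k div 2")
    case True
    have "(real d - real k + 2 * real i + 1) * \<beta> \<le> real d * \<beta>"
      using True beta_nonneg by (intro mult_right_mono) linarith+
    then show ?thesis using above[OF True] by linarith
  qed (use at_half assms(7) in simp)
  show "0 \<le> \<alpha>"
  proof (cases "i = 0")
    case True
    then show ?thesis using assms(4,6) by (simp add: \<alpha>_def tight_storage_def)
  next
    case False
    then have "0 \<le> (real d - real k + 2 * real i - 1) * \<beta>"
      using beta_nonneg assms(5) by (intro mult_nonneg_nonneg) auto
    then show ?thesis using below False by force
  qed
  show "\<forall>u \<le> k div 2. M \<le> cut_bound k d \<alpha> \<beta> u"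
    using cut_bound_min[OF beta_nonneg _ below above] cut_bound_tight_storage[OF i_k]
    by (simp add: \<alpha>_def)
qed

section \<open>The optimal storage\<close>

lemma fcrs_optimal_storage:
  fixes n k s i :: nat and M \<gamma> :: real
  defines "d \<equiv> fcrs_d n s"
  assumes "2 \<le> s" "s \<le> n div k" "0 < k" "0 < M" "i \<le> k div 2"
    and "fcrs_f n k s M i \<le> \<gamma>" "1 \<le> i \<Longrightarrow> \<gamma> < fcrs_f n k s M (i - 1)"
  shows "is_smallest {\<alpha>. 0 \<le> \<alpha> \<and> fcrs_feasible n k s M \<alpha> (\<gamma> / real d)}
    ((M - real i / real d * (real d - real k + real i) * \<gamma>) / (real k - real i))"
proof -
  have "k * s \<le> n" using assms(3,4) by (simp add: less_eq_div_iff_mult_less_eq mult.commute)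
  then have k_le_d: "k \<le> d" using assms(2) by (simp add: d_def fcrs_d_def less_eq_div_iff_mult_less_eq)
  define \<beta> where "\<beta> = \<gamma> / real d"
  define \<alpha> where "\<alpha> = tight_storage M k d \<beta> i"
  note bounds = tight_storage_cut_bounds[of k n s M i \<gamma>, folded d_def \<beta>_def, folded \<alpha>_def]
  have "(M - real i / real d * (real d - real k + real i) * \<gamma>) / (real k - real i) = \<alpha>"
    by (simp add: \<alpha>_def \<beta>_def tight_storage_def)
  moreover have "fcrs_feasible n k s M \<alpha> \<beta>"
    using bounds assms k_le_d by (intro fcrs_feasible_if_cut_bounds) (simp_all add: d_def)
  moreover have "\<alpha> \<le> \<alpha>'" if "0 \<le> \<alpha>'" "fcrs_feasible n k s M \<alpha>' \<beta>" for \<alpha>'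
  proof -
    have "2 * i \<le> k" "i < k" using assms(4,6) by linarith+
    then have "M \<le> cut_bound k d \<alpha>' \<beta> i"
      using repair_chain.fcrs_feasible_imp_le_cut_bound[OF _ that(2) that(1)] bounds(1) assms k_le_d
      by (simp add: repair_chain_def d_def)
    then show ?thesis
      using cut_bound_tight_storage[OF \<open>i < k\<close>] cut_bound_le_iff[OF \<open>i < k\<close>] by (metis \<alpha>_def)
  qed
  ultimately show ?thesis
    using bounds assms k_le_d by (auto simp: is_smallest_def \<beta>_def)
qed

theorem theorem1:
  fixes n k s :: nat and M \<gamma> :: real
  assumes "0 < n" "0 < k" "0 < s"
    and "2 \<le> s" "s \<le> n div k"
    and "0 < M"
    and "fcrs_f n k s M (k div 2) \<le> \<gamma>"
  shows "(fcrs_f n k s M 0 \<le> \<gamma> \<longrightarrow>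
           is_smallest {\<alpha>. 0 \<le> \<alpha> \<and> fcrs_feasible n k s M \<alpha> (\<gamma> / real (fcrs_d n s))}
                   (M / real k))
       \<and> (\<forall>i \<in> {1..k div 2}. fcrs_f n k s M i \<le> \<gamma> \<and> \<gamma> < fcrs_f n k s M (i - 1) \<longrightarrow>
           is_smallest {\<alpha>. 0 \<le> \<alpha> \<and> fcrs_feasible n k s M \<alpha> (\<gamma> / real (fcrs_d n s))}
                   ((M - real i / real (fcrs_d n s) * (real (fcrs_d n s) - real k + real i) * \<gamma>)
                      / (real k - real i)))"
  using fcrs_optimal_storage[OF assms(4,5,2,6), of 0 \<gamma>]
    fcrs_optimal_storage[OF assms(4,5,2,6), of _ \<gamma>]
  by auto

end
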